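(* Let $\kappa$ be a regular uncountable cardinal and let $\mathscr{U},\mathscr{V}$ be ultrafilters over $\kappa$ such that $\mathscr{U}\leq_{\mathrm{RK}}\mathscr{V}$. If $\mathrm{Gal}(\mathscr{V},\kappa,\kappa^+)$ holds, then $\mathrm{Gal}(\mathscr{U},\kappa,\kappa^+)$ holds.
   Context: For a regular uncountable cardinal $\kappa$, a cardinal $\lambda$ and a filter $\mathscr{F}$ over $\kappa$, $\mathrm{Gal}(\mathscr{F},\kappa,\lambda)$ (Galvin's property) means: every sequence $\langle A_\alpha\mid \alpha<\lambda\rangle$ of members of $\mathscr{F}$ admits a subsequence $\langle A_{\alpha_\beta}\mid \beta<\kappa\rangle$ (i.e. a set of $\kappa$ many indices) with $\bigcap_{\beta<\kappa}A_{\alpha_\beta}\in\mathscr{F}$. $\mathscr{U}\leq_{\mathrm{RK}}\mathscr{V}$ (Rudin–Keisler) means there is $f\colon\kappa\to\kappa$ such that for every $X\subseteq\kappa$, $X\in\mathscr{U}$ iff $f^{-1}[X]\in\mathscr{V}$. *)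

theory Defs
  imports Main "HOL-Library.Countable_Set"
begin

text \<open>kappa is represented by the type 'a (its universe UNIV); filters over kappa are
  families of subsets of UNIV :: 'a set.\<close>

definition is_filter :: "'a set set \<Rightarrow> bool" where
  "is_filter F \<longleftrightarrow> UNIV \<in> F \<and> {} \<notin> F \<and>
     (\<forall>X Y. X \<in> F \<and> Y \<in> F \<longrightarrow> X \<inter> Y \<in> F) \<and>
     (\<forall>X Y. X \<in> F \<and> X \<subseteq> Y \<longrightarrow> Y \<in> F)"

definition is_ultrafilter :: "'a set set \<Rightarrow> bool" where
  "is_ultrafilter U \<longleftrightarrow> is_filter U \<and> (\<forall>X. X \<in> U \<or> - X \<in> U)"

definition RK_le :: "'a set set \<Rightarrow> 'a set set \<Rightarrow> bool" where
  "RK_le U V \<longleftrightarrow> (\<exists>f :: 'a \<Rightarrow> 'a. \<forall>X. X \<in> U \<longleftrightarrow> f -` X \<in> V)"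

text \<open>Galvin's property Gal(F, kappa, lambda), with kappa = |UNIV :: 'a set| and lambda
  given as the cardinality of an index set L: every L-indexed sequence of members of F
  has kappa many indices whose sets have intersection in F.\<close>
definition Gal :: "'a set set \<Rightarrow> 'b set \<Rightarrow> bool" where
  "Gal F L \<longleftrightarrow> (\<forall>A :: 'b \<Rightarrow> 'a set. (\<forall>\<alpha>\<in>L. A \<alpha> \<in> F) \<longrightarrow>
      (\<exists>I\<subseteq>L. (card_of I, card_of (UNIV :: 'a set)) \<in> ordIso \<and> (\<Inter>\<alpha>\<in>I. A \<alpha>) \<in> F))"

end

theory Submission
  imports Defs
begin

text \<open>Preimage commutes with intersections, so pulling a sequence of U-sets back along the
  Rudin-Keisler map and applying Galvin's property in V yields the required subfamily.\<close>

lemma Gal_vimage_reflecting: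
  fixes f :: "'a \<Rightarrow> 'a" and U V :: "'a set set" and L :: "'b set"
  assumes reflect: "\<And>X. X \<in> U \<longleftrightarrow> f -` X \<in> V"
    and "Gal V L"
  shows "Gal U L"
  unfolding Gal_def
proof (intro allI impI)
  fix A :: "'b \<Rightarrow> 'a set"
  assume "\<forall>\<alpha>\<in>L. A \<alpha> \<in> U"
  then have "\<forall>\<alpha>\<in>L. f -` A \<alpha> \<in> V"
    using reflect by blast
  then obtain I where I: "I \<subseteq> L" "(card_of I, card_of (UNIV :: 'a set)) \<in> ordIso"
      and "(\<Inter>\<alpha>\<in>I. f -` A \<alpha>) \<in> V"
    using \<open>Gal V L\<close> unfolding Gal_def by (elim allE[of _ "\<lambda>\<alpha>. f -` A \<alpha>"]) blast
  moreover have "f -` (\<Inter>\<alpha>\<in>I. A \<alpha>) = (\<Inter>\<alpha>\<in>I. f -` A \<alpha>)"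
    by auto
  ultimately have "(\<Inter>\<alpha>\<in>I. A \<alpha>) \<in> U"
    using reflect by simp
  with I show "\<exists>I\<subseteq>L. (card_of I, card_of (UNIV :: 'a set)) \<in> ordIso \<and> (\<Inter>\<alpha>\<in>I. A \<alpha>) \<in> U"
    by blast
qed

lemma Gal_RK_le:
  assumes "RK_le U V" and "Gal V L"
  shows "Gal U L"
proof -
  from \<open>RK_le U V\<close> obtain f :: "'a \<Rightarrow> 'a" where "\<And>X. X \<in> U \<longleftrightarrow> f -` X \<in> V"
    unfolding RK_le_def by blast
  then show ?thesis
    using \<open>Gal V L\<close> by (rule Gal_vimage_reflecting)
qed

theorem lemma2p1:
  fixes U V :: "'a set set" and L :: "'b set"
  assumes "regularCard (card_of (UNIV :: 'a set))"
    and "\<not> countable (UNIV :: 'a set)"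
    and "is_ultrafilter U" and "is_ultrafilter V"
    and "RK_le U V"
    and "(card_of L, cardSuc (card_of (UNIV :: 'a set))) \<in> ordIso"
    and "Gal V L"
  shows "Gal U L"
  using Gal_RK_le assms(5,7) .

end
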